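(* Let $n\in\mathbb{N}_0$ and $r\in\mathbb{N}$, let $I$ be an open interval, and let $f_i,g_i:I\to\mathbb{R}$ ($i=1,\ldots,r$) be functions which have a derivative of order $n$ on $I$. Suppose that $\sum_{i=1}^{r}g_i=0$ on $I$. Then, for every $\mathbf{s}=(s_1,\ldots,s_r)\in(\mathbb{Z}_{\ge 0})^r$ with $|\mathbf{s}|\le n$, \[ \sum_{|\mathbf{k}|=n}\binom{n}{\mathbf{k}}\prod_{i=1}^{r}\left(f_i g_i^{k_i}\right)^{(s_i)}= \begin{cases} 0, & |\mathbf{s}|<n,\\[2mm] n!\left(\prod_{i=1}^{r}f_i\right)\prod_{i=1}^{r}\left(g_i'\right)^{s_i}, & |\mathbf{s}|=n. \end{cases} \]
   Context: For $\mathbf{k}=(k_1,\ldots,k_r)\in\mathbb{Z}^r$, $|\mathbf{k}|=k_1+\cdots+k_r$. The sum $\sum_{|\mathbf{k}|=n}$ runs over all $\mathbf{k}\in(\mathbb{Z}_{\ge0})^r$ with $|\mathbf{k}|=n$, and $\binom{n}{\mathbf{k}}=\frac{n!}{k_1!\cdots k_r!\,(n-|\mathbf{k}|)!}$, which for $|\mathbf{k}|=n$ is the multinomial coefficient $\frac{n!}{k_1!\cdots k_r!}$. $h^{(s)}$ denotes the $s$-th derivative of $h$ (with $h^{(0)}=h$), and $g^0=1$. *)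

theory Defs
  imports "HOL-Analysis.Analysis"
begin

definition has_deriv_of_order_on :: "nat \<Rightarrow> (real \<Rightarrow> real) \<Rightarrow> real set \<Rightarrow> bool" where
  "has_deriv_of_order_on n h I \<longleftrightarrow> (\<forall>m<n. \<forall>x\<in>I. ((deriv ^^ m) h) differentiable (at x))"

text \<open>Multi-indices k = (k_0,...,k_{r-1}) in (Z_{>=0})^r with |k| = n
  (represented as functions vanishing outside {..<r}).\<close>
definition multi_indices :: "nat \<Rightarrow> nat \<Rightarrow> (nat \<Rightarrow> nat) set" where
  "multi_indices r n = {k. (\<forall>i. r \<le> i \<longrightarrow> k i = 0) \<and> (\<Sum>i<r. k i) = n}"

definition multinom :: "nat \<Rightarrow> nat \<Rightarrow> (nat \<Rightarrow> nat) \<Rightarrow> nat" where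
  "multinom n r k = fact n div ((\<Prod>i<r. fact (k i)) * fact (n - (\<Sum>i<r. k i)))"

end

theory Submission
  imports Defs "HOL-Computational_Algebra.Formal_Power_Series"
begin

text \<open>By the Leibniz and chain rules,
  (f g^k)^(s) = \<Sum>_{m \<le> s} k (k - 1) \<cdots> (k - m + 1) g^(k - m) B_{s,m},
  where the coefficients B_{s,m}, built from f, g and their derivatives, do not depend on k,
  vanish for m > s and satisfy B_{s,s} = f g'^s. Hence the exponential generating function
  \<Sum>_k (f g^k)^(s)(x) t^k / k! equals B_s(t) e^(g(x) t) for the polynomial
  B_s(t) = \<Sum>_m B_{s,m}(x) t^m of degree at most s. The left-hand side of the theorem is n! times
  the coefficient of t^n in the product of these series over i. Since \<Sum>_i g_i(x) = 0 the
  exponentials cancel, leaving the polynomial \<Prod>_i B_{s_i}(t) of degree at most |s|, whose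
  coefficient of t^|s| is \<Prod>_i f_i(x) g_i'(x)^{s_i}.\<close>

unbundle no vec_syntax
notation fps_nth (infixl \<open>$\<close> 75)

lemma higher_deriv_cong_on_open:
  assumes "open I" "\<And>y. y \<in> I \<Longrightarrow> u y = v y" "x \<in> I"
  shows "(deriv ^^ m) u x = (deriv ^^ m) v x"
proof (rule higher_deriv_cong_ev[OF _ refl])
  show "\<forall>\<^sub>F y in nhds x. u y = v y"
    using eventually_nhds_in_open[OF assms(1,3)] assms(2) by (auto elim: eventually_mono)
qed

lemma has_deriv_of_order_on_cong:
  assumes "open I" "\<And>y. y \<in> I \<Longrightarrow> u y = v y" "has_deriv_of_order_on n u I"
  shows "has_deriv_of_order_on n v I"
  unfolding has_deriv_of_order_on_def
proof (intro allI impI ballI)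
  fix m x assume "m < n" "x \<in> I"
  then have "(deriv ^^ m) u differentiable at x"
    using assms(3) by (simp add: has_deriv_of_order_on_def)
  moreover have "\<And>y. y \<in> I \<Longrightarrow> (deriv ^^ m) u y = (deriv ^^ m) v y"
    by (rule higher_deriv_cong_on_open[OF assms(1)]) (use assms(2) in auto)
  ultimately show "(deriv ^^ m) v differentiable at x"
    using \<open>x \<in> I\<close> assms(1) has_derivative_transform_within_open unfolding differentiable_def
    by blast
qed

lemma has_deriv_of_order_on_mono:
  "has_deriv_of_order_on n h I \<Longrightarrow> m \<le> n \<Longrightarrow> has_deriv_of_order_on m h I"
  unfolding has_deriv_of_order_on_def by auto

lemma has_deriv_of_order_on_Suc_iff:
  "has_deriv_of_order_on (Suc n) h I \<longleftrightarrow>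
     (\<forall>x\<in>I. h differentiable at x) \<and> has_deriv_of_order_on n (deriv h) I"
  unfolding has_deriv_of_order_on_def
  by (auto simp: less_Suc_eq_0_disj funpow_Suc_right simp del: funpow.simps)

lemma has_deriv_of_order_on_const: "has_deriv_of_order_on n (\<lambda>_. c) I"
proof (induction n arbitrary: c)
  case 0 then show ?case by (simp add: has_deriv_of_order_on_def)
next
  case (Suc n)
  moreover have "deriv (\<lambda>_. c) = (\<lambda>_. 0)" by auto
  ultimately show ?case by (simp add: has_deriv_of_order_on_Suc_iff)
qed

lemma has_deriv_of_order_on_add:
  assumes "open I" "has_deriv_of_order_on n u I" "has_deriv_of_order_on n v I"
  shows "has_deriv_of_order_on n (\<lambda>y. u y + v y) I"
  using assms(2,3)
proof (induction n arbitrary: u v)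
  case 0 then show ?case by (simp add: has_deriv_of_order_on_def)
next
  case (Suc n)
  then have diff: "\<forall>x\<in>I. u differentiable at x \<and> v differentiable at x"
    by (simp add: has_deriv_of_order_on_Suc_iff)
  have "\<And>y. y \<in> I \<Longrightarrow> deriv u y + deriv v y = deriv (\<lambda>y. u y + v y) y"
    using diff by (auto intro!: DERIV_imp_deriv[symmetric] derivative_eq_intros
        simp: DERIV_deriv_iff_real_differentiable)
  moreover have "has_deriv_of_order_on n (\<lambda>y. deriv u y + deriv v y) I"
    using Suc by (simp add: has_deriv_of_order_on_Suc_iff)
  ultimately have "has_deriv_of_order_on n (deriv (\<lambda>y. u y + v y)) I"
    by (rule has_deriv_of_order_on_cong[OF assms(1)])
  then show ?case
    using diff by (simp add: has_deriv_of_order_on_Suc_iff)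
qed

lemma has_deriv_of_order_on_mult:
  assumes "open I" "has_deriv_of_order_on n u I" "has_deriv_of_order_on n v I"
  shows "has_deriv_of_order_on n (\<lambda>y. u y * v y) I"
  using assms(2,3)
proof (induction n arbitrary: u v)
  case 0 then show ?case by (simp add: has_deriv_of_order_on_def)
next
  case (Suc n)
  then have diff: "\<forall>x\<in>I. u differentiable at x \<and> v differentiable at x"
    by (simp add: has_deriv_of_order_on_Suc_iff)
  have "deriv u y * v y + u y * deriv v y = deriv (\<lambda>y. u y * v y) y" if "y \<in> I" for y
  proof -
    have "(u has_real_derivative deriv u y) (at y)" "(v has_real_derivative deriv v y) (at y)"
      using diff that by (simp_all add: DERIV_deriv_iff_real_differentiable)
    from DERIV_mult[OF this] show ?thesis
      by (intro DERIV_imp_deriv[symmetric]) (simp add: mult.commute)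
  qed
  moreover have "has_deriv_of_order_on n (\<lambda>y. deriv u y * v y + u y * deriv v y) I"
    using Suc has_deriv_of_order_on_mono[of "Suc n" _ I n]
    by (simp add: has_deriv_of_order_on_Suc_iff has_deriv_of_order_on_add[OF assms(1)])
  ultimately have "has_deriv_of_order_on n (deriv (\<lambda>y. u y * v y)) I"
    by (rule has_deriv_of_order_on_cong[OF assms(1)])
  then show ?case
    using diff by (simp add: has_deriv_of_order_on_Suc_iff)
qed

fun deriv_power_coeff :: "(real \<Rightarrow> real) \<Rightarrow> (real \<Rightarrow> real) \<Rightarrow> nat \<Rightarrow> nat \<Rightarrow> real \<Rightarrow> real" where
  "deriv_power_coeff f g 0 m = (if m = 0 then f else (\<lambda>_. 0))"
| "deriv_power_coeff f g (Suc s) 0 = deriv (deriv_power_coeff f g s 0)"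
| "deriv_power_coeff f g (Suc s) (Suc m) =
     (\<lambda>y. deriv (deriv_power_coeff f g s (Suc m)) y + deriv g y * deriv_power_coeff f g s m y)"

lemma deriv_power_coeff_eq_0: "s < m \<Longrightarrow> deriv_power_coeff f g s m = (\<lambda>_. 0)"
proof (induction s arbitrary: m)
  case (Suc s)
  then obtain m' where "m = Suc m'" by (cases m) auto
  with Suc show ?case by simp
qed simp

lemma deriv_power_coeff_diag: "deriv_power_coeff f g s s y = f y * deriv g y ^ s"
  by (induction s arbitrary: y) (auto simp: deriv_power_coeff_eq_0)

lemma has_deriv_of_order_on_deriv_power_coeff:
  assumes "open I" "has_deriv_of_order_on n f I" "has_deriv_of_order_on n g I" "s \<le> n"
  shows "has_deriv_of_order_on (n - s) (deriv_power_coeff f g s m) I"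
  using assms(4)
proof (induction s arbitrary: m)
  case 0 then show ?case using assms(2) by (simp add: has_deriv_of_order_on_const)
next
  case (Suc s)
  have IH: "has_deriv_of_order_on (Suc (n - Suc s)) (deriv_power_coeff f g s m) I" for m
    using Suc by (simp add: Suc_diff_Suc)
  have "has_deriv_of_order_on (Suc (n - Suc s)) g I"
    using Suc.prems has_deriv_of_order_on_mono[OF assms(3)] by simp
  then have "has_deriv_of_order_on (n - Suc s) (deriv g) I"
    by (simp add: has_deriv_of_order_on_Suc_iff)
  moreover have "has_deriv_of_order_on (n - Suc s) (deriv_power_coeff f g s m) I" for m
    using IH has_deriv_of_order_on_mono by (metis le_SucI order_refl)
  ultimately show ?case
    using IH by (cases m) (auto simp: has_deriv_of_order_on_Suc_iff
        intro!: has_deriv_of_order_on_add[OF assms(1)] has_deriv_of_order_on_mult[OF assms(1)])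
qed

lemma sum_deriv_power_coeff_Suc:
  fixes c :: "nat \<Rightarrow> real"
  shows "(\<Sum>m\<le>Suc s. c m * deriv_power_coeff f g (Suc s) m y)
       = (\<Sum>m\<le>s. c m * deriv (deriv_power_coeff f g s m) y
                   + c (Suc m) * (deriv g y * deriv_power_coeff f g s m y))"
proof -
  have "(\<Sum>m\<le>s. c m * deriv (deriv_power_coeff f g s m) y)
      = (\<Sum>m\<le>Suc s. c m * deriv (deriv_power_coeff f g s m) y)"
    by (simp add: deriv_power_coeff_eq_0)
  also have "\<dots> = c 0 * deriv (deriv_power_coeff f g s 0) y
                   + (\<Sum>m\<le>s. c (Suc m) * deriv (deriv_power_coeff f g s (Suc m)) y)"
    by (subst sum.atMost_Suc_shift) simp
  finally show ?thesis
    by (subst sum.atMost_Suc_shift) (simp add: sum.distrib ring_distribs)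
qed

definition falling_fact :: "nat \<Rightarrow> nat \<Rightarrow> real" where
  "falling_fact k m = (\<Prod>i<m. real (k - i))"

lemma falling_fact_Suc: "falling_fact k (Suc m) = falling_fact k m * real (k - m)"
  by (simp add: falling_fact_def)

lemma falling_fact_eq_0: "k < m \<Longrightarrow> falling_fact k m = 0"
  unfolding falling_fact_def by (rule prod_zero) (auto intro!: bexI[of _ k])

lemma falling_fact_mult_fact: "m \<le> k \<Longrightarrow> falling_fact k m * fact (k - m) = fact k"
proof (induction m)
  case 0 then show ?case by (simp add: falling_fact_def)
next
  case (Suc m)
  have "fact (k - m) = real (k - m) * fact (k - Suc m)"
    using Suc.prems by (metis Suc_diff_Suc Suc_le_lessD fact_Suc)
  then show ?case using Suc by (simp add: falling_fact_Suc mult_ac)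
qed

lemma DERIV_falling_fact_power_mult:
  assumes "(g has_real_derivative g') (at y)" "(b has_real_derivative b') (at y)"
  shows "((\<lambda>y. falling_fact k m * (g y ^ (k - m) * b y)) has_real_derivative
           falling_fact k m * (g y ^ (k - m) * b') + falling_fact k (Suc m) * (g' * b y)
             * g y ^ (k - Suc m)) (at y)"
proof -
  have "((\<lambda>y. g y ^ (k - m)) has_real_derivative real (k - m) * g y ^ (k - Suc m) * g') (at y)"
    using DERIV_chain2[OF DERIV_pow assms(1), of "k - m"] by simp
  from DERIV_cmult[OF DERIV_mult'[OF this assms(2)], of "falling_fact k m"]
  show ?thesis by (simp add: falling_fact_Suc algebra_simps)
qed

lemma higher_deriv_mult_power:
  assumes "open I" "has_deriv_of_order_on n f I" "has_deriv_of_order_on n g I"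
    and "s \<le> n" "y \<in> I"
  shows "(deriv ^^ s) (\<lambda>y. f y * g y ^ k) y
       = (\<Sum>m\<le>s. falling_fact k m * (g y ^ (k - m) * deriv_power_coeff f g s m y))"
  using assms(4,5)
proof (induction s arbitrary: y)
  case 0 then show ?case by (simp add: falling_fact_def)
next
  case (Suc s)
  let ?B = "deriv_power_coeff f g s"
  let ?T = "\<lambda>y. \<Sum>m\<le>s. falling_fact k m * (g y ^ (k - m) * ?B m y)"
  have IH: "(deriv ^^ s) (\<lambda>y. f y * g y ^ k) z = ?T z" if "z \<in> I" for z
    using Suc.IH Suc.prems(1) that by simp
  have "has_deriv_of_order_on (Suc (n - Suc s)) g I"
    by (rule has_deriv_of_order_on_mono[OF assms(3)]) (use Suc.prems in simp)
  moreover have "has_deriv_of_order_on (Suc (n - Suc s)) (?B m) I" for m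
    using has_deriv_of_order_on_deriv_power_coeff[OF assms(1-3), of s m] Suc.prems(1)
    by (simp add: Suc_diff_Suc)
  ultimately have g_diff: "(g has_real_derivative deriv g y) (at y)"
    and B_diff: "(?B m has_real_derivative deriv (?B m) y) (at y)" for m
    using Suc.prems(2) by (simp_all add: has_deriv_of_order_on_Suc_iff DERIV_deriv_iff_real_differentiable)
  have "(deriv ^^ Suc s) (\<lambda>y. f y * g y ^ k) y = deriv ?T y"
    using higher_deriv_cong_on_open[OF assms(1) IH Suc.prems(2), where m = 1] by simp
  also have "\<dots> = (\<Sum>m\<le>s. falling_fact k m * (g y ^ (k - m) * deriv (?B m) y)
             + falling_fact k (Suc m) * (deriv g y * ?B m y) * g y ^ (k - Suc m))"
    by (intro DERIV_imp_deriv DERIV_sum DERIV_falling_fact_power_mult g_diff B_diff)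
  also have "\<dots> = (\<Sum>m\<le>Suc s. falling_fact k m * (g y ^ (k - m) * deriv_power_coeff f g (Suc s) m y))"
    by (simp only: mult.assoc[symmetric] sum_deriv_power_coeff_Suc) (simp only: mult_ac)
  finally show ?case .
qed

lemma multi_indices_0: "multi_indices 0 n = (if n = 0 then {\<lambda>_. 0} else {})"
  by (auto simp: multi_indices_def)

lemma finite_multi_indices: "finite (multi_indices r n)"
proof (rule finite_subset)
  show "multi_indices r n \<subseteq> {k. \<forall>i. (i \<in> {..<r} \<longrightarrow> k i \<in> {..n}) \<and> (i \<notin> {..<r} \<longrightarrow> k i = 0)}"
  proof (intro subsetI CollectI allI conjI impI)
    fix k i assume "k \<in> multi_indices r n" "i \<in> {..<r}"
    moreover have "k i \<le> (\<Sum>j<r. k j)" using \<open>i \<in> {..<r}\<close> by (intro member_le_sum) auto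
    ultimately show "k i \<in> {..n}" by (simp add: multi_indices_def)
  next
    fix k i assume "k \<in> multi_indices r n" "i \<notin> {..<r}"
    then show "k i = 0" by (simp add: multi_indices_def)
  qed
qed (intro finite_set_of_finite_funs finite_lessThan finite_atMost)

lemma sum_lessThan_fun_upd_bound: "(\<Sum>i<(r::nat). (k(r := a)) i) = (\<Sum>i<r. k i)"
  by (rule sum.cong) auto

lemma sum_multi_indices_Suc:
  "(\<Sum>k\<in>multi_indices (Suc r) n. h k)
    = (\<Sum>(j,k)\<in>(SIGMA j:{..n}. multi_indices r j). h (k(r := n - j)))"
proof (rule sum.reindex_bij_witness[symmetric, where j = "\<lambda>(j,k). k(r := n - j)"
      and i = "\<lambda>k. (n - k r, k(r := 0))"])
  fix jk assume "jk \<in> (SIGMA j:{..n}. multi_indices r j)"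
  then obtain j k where [simp]: "jk = (j, k)" and "j \<le> n" "k \<in> multi_indices r j" by auto
  then show "(\<lambda>k. (n - k r, k(r := 0))) ((\<lambda>(j,k). k(r := n - j)) jk) = jk"
    and "(\<lambda>(j,k). k(r := n - j)) jk \<in> multi_indices (Suc r) n"
    by (auto simp: fun_eq_iff multi_indices_def sum_lessThan_fun_upd_bound)
next
  fix k assume "k \<in> multi_indices (Suc r) n"
  then show "(\<lambda>(j,k). k(r := n - j)) ((\<lambda>k. (n - k r, k(r := 0))) k) = k"
    and "(\<lambda>k. (n - k r, k(r := 0))) k \<in> (SIGMA j:{..n}. multi_indices r j)"
    by (auto simp: fun_eq_iff multi_indices_def sum_lessThan_fun_upd_bound)
qed auto

lemma fps_prod_lessThan_nth:
  fixes F :: "nat \<Rightarrow> 'a::comm_ring_1 fps"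
  shows "(\<Prod>i<r. F i) $ n = (\<Sum>k\<in>multi_indices r n. \<Prod>i<r. F i $ k i)"
proof (induction r arbitrary: n)
  case 0 then show ?case by (simp add: multi_indices_0)
next
  case (Suc r)
  have "(\<Prod>i<Suc r. F i) $ n = (\<Sum>j\<le>n. \<Sum>k\<in>multi_indices r j. (\<Prod>i<r. F i $ k i) * F r $ (n - j))"
    by (simp add: fps_mult_nth Suc sum_distrib_right atLeast0AtMost)
  also have "\<dots> = (\<Sum>(j,k)\<in>(SIGMA j:{..n}. multi_indices r j). (\<Prod>i<r. F i $ k i) * F r $ (n - j))"
    by (rule sum.Sigma) (auto simp: finite_multi_indices)
  also have "\<dots> = (\<Sum>(j,k)\<in>(SIGMA j:{..n}. multi_indices r j). \<Prod>i<Suc r. F i $ (k(r := n - j)) i)"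
  proof (intro sum.cong refl, clarify)
    fix j k
    have "(\<Prod>i<r. F i $ (k(r := n - j)) i) = (\<Prod>i<r. F i $ k i)" by (intro prod.cong) auto
    then show "(\<Prod>i<r. F i $ k i) * F r $ (n - j) = (\<Prod>i<Suc r. F i $ (k(r := n - j)) i)" by simp
  qed
  also have "\<dots> = (\<Sum>k\<in>multi_indices (Suc r) n. \<Prod>i<Suc r. F i $ k i)"
    by (rule sum_multi_indices_Suc[symmetric])
  finally show ?case .
qed

lemma fps_prod_lessThan_nth_degree_bound:
  fixes F :: "nat \<Rightarrow> 'a::comm_ring_1 fps"
  assumes "\<And>i m. i < r \<Longrightarrow> d i < m \<Longrightarrow> F i $ m = 0" and "(\<Sum>i<r. d i) \<le> N"
  shows "(\<Prod>i<r. F i) $ N = (if N = (\<Sum>i<r. d i) then \<Prod>i<r. F i $ d i else 0)"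
proof -
  define d' where "d' i = (if i < r then d i else 0)" for i
  have summand: "(\<Prod>i<r. F i $ k i) = (if k = d' then \<Prod>i<r. F i $ d i else 0)"
    if k: "k \<in> multi_indices r N" for k
  proof (cases "\<forall>i<r. k i \<le> d i")
    case True
    have k_sum: "(\<Sum>i<r. k i) = N" and k_zero: "\<And>i. r \<le> i \<Longrightarrow> k i = 0"
      using k by (auto simp: multi_indices_def)
    have "(\<Sum>i<r. k i) \<le> (\<Sum>i<r. d i)"
      using True by (intro sum_mono) simp
    then have sum_eq: "(\<Sum>i<r. k i) = (\<Sum>i<r. d i)"
      using k_sum assms(2) by linarith
    have "k i = d' i" for i
    proof (cases "i < r")
      case True
      then show ?thesis
        using sum_mono_inv[OF sum_eq, of i] \<open>\<forall>i<r. k i \<le> d i\<close> by (simp add: d'_def)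
    qed (simp add: d'_def k_zero)
    then show ?thesis by (simp add: fun_eq_iff d'_def)
  next
    case False
    then obtain i where "i < r" "d i < k i" by (auto simp: not_le)
    then have "(\<Prod>i<r. F i $ k i) = 0" using assms(1) by (intro prod_zero) auto
    moreover have "k \<noteq> d'" using \<open>i < r\<close> \<open>d i < k i\<close> by (auto simp: d'_def)
    ultimately show ?thesis by simp
  qed
  have "d' \<in> multi_indices r N \<longleftrightarrow> N = (\<Sum>i<r. d i)"
    by (auto simp: multi_indices_def d'_def)
  then show ?thesis
    by (simp add: fps_prod_lessThan_nth summand finite_multi_indices cong: sum.cong)
qed

lemma prod_fact_dvd_fact_sum: "(\<Prod>i<(r::nat). fact (k i)) dvd (fact (\<Sum>i<r. k i) :: nat)"
proof (induction r)
  case 0 then show ?case by simp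
next
  case (Suc r)
  let ?S = "\<Sum>i<r. k i"
  have "(\<Prod>i<r. fact (k i)) * fact (k r) dvd (fact ?S * fact (k r) :: nat)"
    using Suc by (simp add: mult_dvd_mono)
  also have "\<dots> dvd fact (?S + k r)"
    using binomial_fact_lemma[of "k r" "?S + k r"] by (metis add_diff_cancel_right' dvd_triv_left le_add2 mult.commute)
  finally show ?case by simp
qed

lemma multinom_eq:
  assumes "k \<in> multi_indices r n"
  shows "real (multinom n r k) = fact n / (\<Prod>i<r. fact (k i))"
proof -
  have n: "(\<Sum>i<r. k i) = n" using assms by (simp add: multi_indices_def)
  have "real (fact n div (\<Prod>i<r. fact (k i))) = real (fact n) / real (\<Prod>i<r. fact (k i))"
    by (rule real_of_nat_div) (metis prod_fact_dvd_fact_sum n)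
  then show ?thesis by (simp add: multinom_def n)
qed

lemma fps_exp_sum: "(\<Prod>i<(r::nat). fps_exp (c i)) = fps_exp (\<Sum>i<r. c i :: 'a::field_char_0)"
  by (induction r) (simp_all add: fps_exp_add_mult)

lemma Abs_fps_falling_fact_sum:
  fixes b :: "nat \<Rightarrow> real"
  assumes "\<And>m. s < m \<Longrightarrow> b m = 0"
  shows "Abs_fps (\<lambda>k. (\<Sum>m\<le>s. falling_fact k m * (c ^ (k - m) * b m)) / fact k)
       = Abs_fps b * fps_exp c"
proof (rule fps_ext)
  fix k
  let ?t = "\<lambda>m. if m \<le> k then b m * (c ^ (k - m) / fact (k - m)) else 0"
  have "(\<Sum>m\<le>s. falling_fact k m * (c ^ (k - m) * b m)) / fact k = (\<Sum>m\<le>s + k. ?t m)"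
    unfolding sum_divide_distrib
  proof (rule sum.mono_neutral_cong_left)
    fix m assume "m \<in> {..s}"
    show "falling_fact k m * (c ^ (k - m) * b m) / fact k = ?t m"
    proof (cases "m \<le> k")
      case True
      then have "fact k = falling_fact k m * fact (k - m)" "falling_fact k m \<noteq> 0"
        using falling_fact_mult_fact[OF True] by (auto simp del: of_nat_fact)
      then show ?thesis using True by (simp add: field_simps)
    qed (simp add: falling_fact_eq_0)
  qed (use assms in auto)
  also have "\<dots> = (\<Sum>m=0..k. b m * (c ^ (k - m) / fact (k - m)))"
    by (rule sum.mono_neutral_cong_right) auto
  finally show "Abs_fps (\<lambda>k. (\<Sum>m\<le>s. falling_fact k m * (c ^ (k - m) * b m)) / fact k) $ k
      = (Abs_fps b * fps_exp c) $ k"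
    by (simp add: fps_mult_nth)
qed

theorem theorem1:
  fixes n r :: nat and I :: "real set" and f g :: "nat \<Rightarrow> real \<Rightarrow> real"
    and s :: "nat \<Rightarrow> nat" and x :: real
  assumes "r \<ge> 1"
    and "open I" and "is_interval I"
    and "\<forall>i<r. has_deriv_of_order_on n (f i) I"
    and "\<forall>i<r. has_deriv_of_order_on n (g i) I"
    and "\<forall>y\<in>I. (\<Sum>i<r. g i y) = 0"
    and "(\<Sum>i<r. s i) \<le> n"
    and "x \<in> I"
  shows "(\<Sum>k\<in>multi_indices r n. real (multinom n r k) *
            (\<Prod>i<r. (deriv ^^ s i) (\<lambda>y. f i y * g i y ^ k i) x))
         = (if (\<Sum>i<r. s i) < n then 0
            else fact n * (\<Prod>i<r. f i x) * (\<Prod>i<r. deriv (g i) x ^ s i))"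
proof -
  \<comment> \<open>Only the behaviour near \<open>x\<close> matters.\<close>
  define a where "a i k = (deriv ^^ s i) (\<lambda>y. f i y * g i y ^ k) x" for i k
  define B where "B i = Abs_fps (\<lambda>m. deriv_power_coeff (f i) (g i) (s i) m x)" for i
  have egf: "Abs_fps (\<lambda>k. a i k / fact k) = B i * fps_exp (g i x)" if "i < r" for i
  proof -
    have "s i \<le> n" using that assms(7) by (metis finite_lessThan lessThan_iff member_le_sum le_trans zero_le)
    then have "a i k = (\<Sum>m\<le>s i. falling_fact k m
                          * (g i x ^ (k - m) * deriv_power_coeff (f i) (g i) (s i) m x))" for k
      unfolding a_def using that assms(2,4,5,8) by (intro higher_deriv_mult_power) auto
    then show ?thesis
      unfolding B_def by (simp only:) (rule Abs_fps_falling_fact_sum, simp add: deriv_power_coeff_eq_0)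
  qed
  have "(\<Sum>k\<in>multi_indices r n. real (multinom n r k) * (\<Prod>i<r. a i (k i)))
      = fact n * (\<Prod>i<r. Abs_fps (\<lambda>k. a i k / fact k)) $ n"
    unfolding fps_prod_lessThan_nth sum_distrib_left
    by (intro sum.cong refl) (simp add: multinom_eq prod_dividef)
  also have "(\<Prod>i<r. Abs_fps (\<lambda>k. a i k / fact k)) = (\<Prod>i<r. B i * fps_exp (g i x))"
    by (rule prod.cong) (simp_all add: egf)
  also have "\<dots> = (\<Prod>i<r. B i) * fps_exp (\<Sum>i<r. g i x)"
    by (simp add: prod.distrib fps_exp_sum)
  also have "\<dots> = (\<Prod>i<r. B i)"
    using assms(6,8) by simp
  also have "(\<Prod>i<r. B i) $ n = (if n = (\<Sum>i<r. s i) then \<Prod>i<r. B i $ s i else 0)"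
    by (rule fps_prod_lessThan_nth_degree_bound) (simp_all add: B_def deriv_power_coeff_eq_0 assms(7))
  finally show ?thesis
    using assms(7) by (simp add: a_def B_def deriv_power_coeff_diag prod.distrib)
qed

end
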